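(* Let $\beta$ be a nonzero real number and let $T_\beta\colon\mathbb{R}[x]\to\mathbb{R}[x]$ be the linear operator defined by $T_\beta[x^n]=H_n(\tfrac{\beta}{2}x)$ for all $n\ge0$. Then $$T_\beta=\sum_{n=0}^{\infty}H_n\!\left(\tfrac{\beta-1}{2}x\right)\frac{D^n}{n!},$$ i.e. the coefficient polynomials of $T_\beta$ are $Q_n(x)=H_n(\tfrac{\beta-1}{2}x)$. In particular, the coefficient polynomials of the transformation $x^n\mapsto H_n(x)$ have real interlacing roots.
   Context: $H_n$ denotes the $n$th physicist Hermite polynomial, $H_n(x)=n!\sum_{m=0}^{\lfloor n/2\rfloor}\frac{(-1)^m}{m!(n-2m)!}(2x)^{n-2m}$. $D=d/dx$. Every linear operator $T\colon\mathbb{C}[x]\to\mathbb{C}[x]$ has a unique representation $T=\sum_{k=0}^\infty \frac{Q_k(x)}{k!}D^k$ with polynomials $Q_k(x)$ (the coefficient polynomials of $T$), where the sum acts finitely on each polynomial. *)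

theory Defs
  imports "HOL-Computational_Algebra.Polynomial"
begin

definition hermite :: "nat \<Rightarrow> real poly" where
  "hermite n = (\<Sum>m\<le>n div 2.
      smult (fact n * (-1) ^ m / (fact m * fact (n - 2 * m)) * 2 ^ (n - 2 * m))
            (monom 1 (n - 2 * m)))"

definition T_beta :: "real \<Rightarrow> real poly \<Rightarrow> real poly" where
  "T_beta \<beta> p = (\<Sum>k\<le>degree p. smult (coeff p k) (pcompose (hermite k) [:0, \<beta> / 2:]))"

definition roots_interlace :: "real poly \<Rightarrow> real poly \<Rightarrow> bool" where
  "roots_interlace f g \<longleftrightarrow> f \<noteq> 0 \<and> g \<noteq> 0 \<and> degree g = degree f + 1 \<and>
     (\<exists>a b. length a = degree f \<and> length b = degree g \<and> sorted a \<and> sorted b \<and>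
        f = smult (lead_coeff f) (\<Prod>x\<leftarrow>a. [:- x, 1:]) \<and>
        g = smult (lead_coeff g) (\<Prod>x\<leftarrow>b. [:- x, 1:]) \<and>
        (\<forall>i<degree f. b ! i \<le> a ! i \<and> a ! i \<le> b ! Suc i))"

end

theory Submission
  imports Defs
begin

text \<open>
  Differentiating \<open>H\<^sub>n(a x)\<close> gives \<open>2 n a H\<^sub>n\<^sub>-\<^sub>1(a x)\<close>, so the image \<open>T p\<close> of \<open>p\<close> under
  \<open>x\<^sup>k \<mapsto> H\<^sub>k(a x)\<close> satisfies \<open>(T p)' = 2 a T(p')\<close>, while by the Leibniz rule
  \<open>S p = \<Sum>\<^sub>n H\<^sub>n(b x) p\<^sup>(\<^sup>n\<^sup>) / n!\<close> satisfies \<open>(S p)' = 2 b S(p') + S(p')\<close>. For \<open>2 a = 2 b + 1\<close>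
  (here \<open>a = \<beta>/2\<close>, \<open>b = (\<beta> - 1)/2\<close>) both obey the same recursion and take the same value
  \<open>\<Sum>\<^sub>k p\<^sub>k H\<^sub>k(0)\<close> at \<open>0\<close>, so \<open>T = S\<close> by induction on the degree.

  The polynomials \<open>P\<^sub>n(x) = H\<^sub>n(x/2)\<close> are monic with \<open>P\<^sub>n\<^sub>+\<^sub>2 = x P\<^sub>n\<^sub>+\<^sub>1 - 2(n+1) P\<^sub>n\<close>. If the roots
  of \<open>P\<^sub>n\<close> strictly interlace those of \<open>P\<^sub>n\<^sub>+\<^sub>1\<close>, then \<open>P\<^sub>n\<^sub>+\<^sub>2 = -2(n+1) P\<^sub>n\<close> alternates in sign at
  the roots of \<open>P\<^sub>n\<^sub>+\<^sub>1\<close>, and it has the sign of \<open>x\<^sup>n\<^sup>+\<^sup>2\<close> near \<open>\<plusminus>\<infinity>\<close>; the intermediate value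
  theorem gives \<open>n + 2\<close> roots separated by those of \<open>P\<^sub>n\<^sub>+\<^sub>1\<close>, hence all roots of \<open>P\<^sub>n\<^sub>+\<^sub>2\<close>. Only the
  positivity of \<open>2(n+1)\<close> matters, so the argument applies to every monic three-term
  recurrence \<open>P\<^sub>n\<^sub>+\<^sub>2 = (x - c\<^sub>n\<^sub>+\<^sub>1) P\<^sub>n\<^sub>+\<^sub>1 - \<gamma>\<^sub>n P\<^sub>n\<close> with \<open>\<gamma>\<^sub>n > 0\<close>.
\<close>

lemma pderiv_sum: "pderiv (sum f A) = (\<Sum>x\<in>A. pderiv (f x))"
  using higher_pderiv_sum[of 1] by simp

lemma smult_sum: "smult c (sum f A) = (\<Sum>x\<in>A. smult c (f x))"
  by (induction A rule: infinite_finite_induct) (simp_all add: smult_add_right)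

lemma higher_pderiv_eq_0:
  fixes p :: "'a::{comm_semiring_1,semiring_no_zero_divisors} poly"
  assumes "degree p < n"
  shows "(pderiv ^^ n) p = 0"
  by (rule poly_eqI) (use assms in \<open>simp add: coeff_higher_pderiv coeff_eq_0\<close>)

lemma poly_higher_pderiv_0:
  fixes p :: "'a::{comm_semiring_1,semiring_no_zero_divisors,semiring_char_0} poly"
  shows "poly ((pderiv ^^ n) p) 0 = fact n * coeff p n"
  by (simp add: poly_0_coeff_0 coeff_higher_pderiv pochhammer_fact)

lemma eq_by_pderiv:
  fixes p q :: "'a::{idom,semiring_char_0} poly"
  assumes "pderiv p = pderiv q" and "poly p 0 = poly q 0"
  shows "p = q"
proof -
  obtain c where pq: "p - q = [:c:]"
    using pderiv_iszero[of "p - q"] assms(1) by (auto simp: pderiv_diff)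
  then have "c = poly (p - q) 0"
    by simp
  with assms(2) pq show ?thesis
    by simp
qed

lemma poly_pos_at_top:
  fixes p :: "real poly"
  assumes "lead_coeff p > 0"
  obtains M where "\<And>x. x \<ge> M \<Longrightarrow> poly p x > 0"
  using poly_pinfty_gt_lc[OF assms] assms by (metis less_le_trans)

lemma poly_sign_at_bot:
  fixes p :: "real poly"
  assumes "lead_coeff p > 0"
  obtains M where "\<And>x. x \<le> M \<Longrightarrow> (-1) ^ degree p * poly p x > 0"
proof -
  define q where "q = smult ((-1) ^ degree p) (pcompose p [:0, -1:])"
  have "lead_coeff (pcompose p [:0, -1:]) = lead_coeff p * (-1) ^ degree p"
    by (subst lead_coeff_comp) simp_all
  then have "lead_coeff q = lead_coeff p"
    by (simp add: q_def flip: power_add)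
  with assms obtain M where M: "\<And>x. x \<ge> M \<Longrightarrow> poly q x > 0"
    using poly_pos_at_top[of q] by auto
  have "(-1) ^ degree p * poly p x > 0" if "x \<le> - M" for x
    using M[of "- x"] that by (simp add: q_def poly_pcompose)
  then show thesis
    by (rule that)
qed

lemma poly_signs_outside:
  fixes p :: "real poly"
  assumes "lead_coeff p > 0" and "finite S"
  obtains R where "\<And>x. x \<in> S \<Longrightarrow> - R < x \<and> x < R"
    and "0 < poly p R" and "0 < (-1) ^ degree p * poly p (- R)"
proof -
  obtain M1 where M1: "\<And>x. x \<ge> M1 \<Longrightarrow> poly p x > 0"
    using poly_pos_at_top[OF assms(1)] by blast
  obtain M2 where M2: "\<And>x. x \<le> M2 \<Longrightarrow> (-1) ^ degree p * poly p x > 0"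
    using poly_sign_at_bot[OF assms(1)] by blast
  define R where "R = \<bar>M1\<bar> + \<bar>M2\<bar> + (\<Sum>x\<in>S. \<bar>x\<bar>) + 1"
  have sum_bound: "\<bar>x\<bar> \<le> (\<Sum>y\<in>S. \<bar>y\<bar>)" if "x \<in> S" for x
    using that assms(2) by (intro member_le_sum) auto
  have "0 \<le> (\<Sum>x\<in>S. \<bar>x\<bar>)"
    by (rule sum_nonneg) simp
  then have "M1 \<le> R" "- R \<le> M2"
    unfolding R_def by linarith+
  moreover have "- R < x \<and> x < R" if "x \<in> S" for x
    using sum_bound[OF that] abs_ge_zero[of M1] abs_ge_zero[of M2]
    unfolding R_def abs_le_iff by linarith
  ultimately show thesis
    using M1 M2 that by blast
qed

lemma sign_changes_obtain_roots:
  fixes p :: "real poly"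
  assumes "sorted_wrt (<) t" and "\<And>k. k < length t \<Longrightarrow> 0 < (-1) ^ (m + k) * poly p (t ! k)"
  obtains z where "length z = length t - 1"
    and "\<And>k. k < length z \<Longrightarrow> t ! k < z ! k \<and> z ! k < t ! Suc k \<and> poly p (z ! k) = 0"
proof -
  have "\<exists>x. t ! k < x \<and> x < t ! Suc k \<and> poly p x = 0" if "Suc k < length t" for k
  proof (rule poly_IVT)
    show "t ! k < t ! Suc k"
      using assms(1) that by (simp add: sorted_wrt_iff_nth_less)
    have "0 < (-1) ^ (m + k) * poly p (t ! k)" "0 < (-1) ^ (m + Suc k) * poly p (t ! Suc k)"
      using assms(2)[of k] assms(2)[of "Suc k"] that by simp_all
    then show "poly p (t ! k) * poly p (t ! Suc k) < 0"
      by (cases "even (m + k)") (auto simp: zero_less_mult_iff mult_less_0_iff)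
  qed
  then obtain g where "\<And>k. Suc k < length t \<Longrightarrow> t ! k < g k \<and> g k < t ! Suc k \<and> poly p (g k) = 0"
    by metis
  then show thesis
    by (intro that[of "map g [0..<length t - 1]"]) auto
qed

definition poly_of_roots :: "'a::comm_ring_1 list \<Rightarrow> 'a poly" where
  "poly_of_roots xs = (\<Prod>x\<leftarrow>xs. [:- x, 1:])"

lemma poly_poly_of_roots: "poly (poly_of_roots xs) y = (\<Prod>x\<leftarrow>xs. y - x)"
  by (induction xs) (simp_all add: poly_of_roots_def algebra_simps)

lemma lead_coeff_poly_of_roots: "lead_coeff (poly_of_roots xs) = (1 :: 'a::idom)"
  by (induction xs) (simp_all add: poly_of_roots_def lead_coeff_mult del: mult_pCons_left)

lemma degree_poly_of_roots: "degree (poly_of_roots xs) = length (xs :: 'a::idom list)"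
proof (induction xs)
  case (Cons x xs)
  moreover have "poly_of_roots xs \<noteq> 0"
    using lead_coeff_poly_of_roots[of xs] by auto
  ultimately show ?case
    by (simp add: poly_of_roots_def degree_mult_eq del: mult_pCons_left)
qed (simp add: poly_of_roots_def)

lemma coeff_poly_of_roots_length: "coeff (poly_of_roots xs) (length xs) = (1 :: 'a::idom)"
  using lead_coeff_poly_of_roots[of xs] by (simp add: degree_poly_of_roots)

lemma eq_poly_of_rootsI:
  fixes p :: "'a::idom poly"
  assumes "distinct xs" and "degree p = length xs" and "lead_coeff p = 1"
    and "\<And>x. x \<in> set xs \<Longrightarrow> poly p x = 0"
  shows "p = poly_of_roots xs"
proof (rule poly_eqI_degree_lead_coeff[of p "length xs" _ "set xs"])
  show "poly p x = poly (poly_of_roots xs) x" if "x \<in> set xs" for x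
    using assms(4)[OF that] that by (simp add: poly_poly_of_roots prod_list_zero_iff)
qed (use assms distinct_card[OF assms(1)] coeff_poly_of_roots_length[of xs]
    in \<open>simp_all add: degree_poly_of_roots\<close>)

lemma poly_of_roots_minus_lower_degree:
  fixes q :: "'a::idom poly"
  assumes "degree q < length xs"
  shows "degree (poly_of_roots xs - q) = length xs" and "lead_coeff (poly_of_roots xs - q) = 1"
proof -
  have coeff_top: "coeff (poly_of_roots xs - q) (length xs) = 1"
    using assms coeff_poly_of_roots_length[of xs] by (simp add: coeff_eq_0)
  moreover have "degree (poly_of_roots xs - q) \<le> length xs"
    using assms degree_diff_le_max[of "poly_of_roots xs" q] by (simp add: degree_poly_of_roots)
  ultimately show "degree (poly_of_roots xs - q) = length xs"
    by (metis le_antisym le_degree one_neq_zero)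
  with coeff_top show "lead_coeff (poly_of_roots xs - q) = 1"
    by simp
qed

lemma sign_poly_of_roots_append:
  fixes y :: real
  assumes "\<forall>x\<in>set xs. x < y" and "\<forall>x\<in>set ys. y < x"
  shows "0 < (-1) ^ length ys * poly (poly_of_roots (xs @ ys)) y"
proof -
  have "0 < (\<Prod>x\<leftarrow>xs. y - x)"
    using assms(1) by (induction xs) auto
  moreover have "0 < (-1) ^ length ys * (\<Prod>x\<leftarrow>ys. y - x)"
    using assms(2) by (induction ys) (auto simp: algebra_simps mult_strict_right_mono)
  ultimately show ?thesis
    by (simp add: poly_poly_of_roots mult.left_commute)
qed

definition strictly_interlacing :: "'a::linorder list \<Rightarrow> 'a list \<Rightarrow> bool" where
  "strictly_interlacing a b \<longleftrightarrow>
     length b = Suc (length a) \<and> (\<forall>i<length a. b ! i < a ! i \<and> a ! i < b ! Suc i)"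

lemma strictly_interlacing_sorted:
  assumes "strictly_interlacing a b"
  shows "sorted_wrt (<) a" and "sorted_wrt (<) b"
  using assms less_trans[of "a ! i" "b ! Suc i" "a ! Suc i" for i]
  by (auto simp: strictly_interlacing_def sorted_wrt_iff_nth_Suc_transp)

lemma strictly_interlacing_roots_interlace:
  fixes a b :: "real list"
  assumes "strictly_interlacing a b"
  shows "roots_interlace (poly_of_roots a) (poly_of_roots b)"
  unfolding roots_interlace_def
proof (intro conjI exI)
  show "poly_of_roots a \<noteq> 0" "poly_of_roots b \<noteq> 0"
    using lead_coeff_poly_of_roots[of a] lead_coeff_poly_of_roots[of b] by auto
  show "degree (poly_of_roots b) = degree (poly_of_roots a) + 1"
    using assms by (simp add: degree_poly_of_roots strictly_interlacing_def)
  show "sorted a" "sorted b"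
    using strictly_interlacing_sorted[OF assms] by (simp_all add: strict_sorted_imp_sorted)
  show "\<forall>i<degree (poly_of_roots a). b ! i \<le> a ! i \<and> a ! i \<le> b ! Suc i"
    using assms by (simp add: degree_poly_of_roots strictly_interlacing_def less_imp_le)
qed (simp_all add: degree_poly_of_roots coeff_poly_of_roots_length flip: poly_of_roots_def)

lemma sign_poly_of_roots_interlacing:
  fixes a b :: "real list"
  assumes ab: "strictly_interlacing a b" and i: "i < length b"
  shows "0 < (-1) ^ (length a - i) * poly (poly_of_roots a) (b ! i)"
proof -
  have b_mono: "b ! j \<le> b ! k" if "j \<le> k" "k < length b" for j k
    using strictly_interlacing_sorted(2)[OF ab] that
    by (simp add: sorted_nth_mono strict_sorted_imp_sorted)
  have "\<forall>x\<in>set (take i a). x < b ! i"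
  proof
    fix x assume "x \<in> set (take i a)"
    then obtain j where j: "j < i" "j < length a" and x: "x = a ! j"
      by (auto simp: in_set_conv_nth)
    then have "a ! j < b ! Suc j"
      using ab by (simp add: strictly_interlacing_def)
    then show "x < b ! i"
      using x j i b_mono[of "Suc j" i] by simp
  qed
  moreover have "\<forall>x\<in>set (drop i a). b ! i < x"
  proof
    fix x assume "x \<in> set (drop i a)"
    then obtain j where j: "i \<le> j" "j < length a" and x: "x = a ! j"
      by (auto simp: in_set_conv_nth) (metis le_add1 less_diff_conv add.commute)
    then have "b ! j < a ! j" "j < length b"
      using ab by (simp_all add: strictly_interlacing_def)
    then show "b ! i < x"
      using x j b_mono[of i j] by simp
  qed
  ultimately show ?thesis
    using sign_poly_of_roots_append[of "take i a" "b ! i" "drop i a"] by simp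
qed

lemma sign_three_term_at_interlacing_roots:
  fixes a b :: "real list" and c \<gamma> :: real
  assumes ab: "strictly_interlacing a b" and "\<gamma> > 0" and i: "i < length b"
  shows "0 < (-1) ^ (length a + Suc i) *
    poly (poly_of_roots (c # b) - smult \<gamma> (poly_of_roots a)) (b ! i)"
proof -
  have "poly (poly_of_roots (c # b)) (b ! i) = 0"
    using i by (simp add: poly_poly_of_roots prod_list_zero_iff)
  moreover have "(-1) ^ (length a + Suc i) = - ((-1) ^ (length a - i) :: real)"
    using i ab by (simp add: strictly_interlacing_def neg_one_power_add_eq_neg_one_power_diff)
  ultimately show ?thesis
    using sign_poly_of_roots_interlacing[OF ab i] \<open>\<gamma> > 0\<close>
    by (simp add: mult.left_commute[of _ \<gamma>])
qed

lemma three_term_alternating_signs: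
  fixes a b :: "real list" and c \<gamma> :: real
  assumes ab: "strictly_interlacing a b" and "\<gamma> > 0"
  obtains t where "sorted_wrt (<) t" and "length t = length b + 2"
    and "\<And>i. i < length b \<Longrightarrow> t ! Suc i = b ! i"
    and "\<And>k. k < length t \<Longrightarrow>
      0 < (-1) ^ (length a + k) * poly (poly_of_roots (c # b) - smult \<gamma> (poly_of_roots a)) (t ! k)"
proof -
  define h where "h = poly_of_roots (c # b) - smult \<gamma> (poly_of_roots a)"
  have lb: "length b = Suc (length a)"
    using ab by (simp add: strictly_interlacing_def)
  have "degree (smult \<gamma> (poly_of_roots a)) < length (c # b)"
    by (simp add: degree_poly_of_roots lb)
  note h_monic = poly_of_roots_minus_lower_degree[OF this, folded h_def]
  obtain R where R_b: "\<And>x. x \<in> set b \<Longrightarrow> - R < x \<and> x < R"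
    and R_signs: "0 < poly h R" "0 < (-1) ^ degree h * poly h (- R)"
    using poly_signs_outside[of h "set b"] h_monic by auto
  define t where "t = - R # b @ [R]"
  have "- R < R"
    using R_b[of "b ! 0"] lb by simp
  then have "sorted_wrt (<) t"
    using strictly_interlacing_sorted(2)[OF ab] R_b by (simp add: t_def sorted_wrt_append)
  moreover have "0 < (-1) ^ (length a + k) * poly h (t ! k)" if k: "k < length t" for k
  proof -
    consider "k = 0" | i where "k = Suc i" "i < length b" | "k = Suc (length b)"
      using k by (cases k) (auto simp: t_def less_Suc_eq)
    then show ?thesis
    proof cases
      case 1
      then show ?thesis using R_signs h_monic lb by (simp add: t_def)
    next
      case (2 i)
      then show ?thesis
        using sign_three_term_at_interlacing_roots[OF ab \<open>\<gamma> > 0\<close>, of i c]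
        by (simp add: t_def h_def nth_append)
    next
      case 3
      then show ?thesis using R_signs lb by (simp add: t_def nth_append)
    qed
  qed
  ultimately show thesis
    by (intro that[of t]) (simp_all add: t_def h_def nth_append)
qed

lemma three_term_step_strictly_interlacing:
  fixes a b :: "real list" and c \<gamma> :: real
  assumes ab: "strictly_interlacing a b" and "\<gamma> > 0"
  obtains d where "strictly_interlacing b d"
    and "poly_of_roots (c # b) - smult \<gamma> (poly_of_roots a) = poly_of_roots d"
proof -
  define h where "h = poly_of_roots (c # b) - smult \<gamma> (poly_of_roots a)"
  obtain t where t_sorted: "sorted_wrt (<) t" and t_len: "length t = length b + 2"
    and t_b: "\<And>i. i < length b \<Longrightarrow> t ! Suc i = b ! i"
    and t_sign: "\<And>k. k < length t \<Longrightarrow> 0 < (-1) ^ (length a + k) * poly h (t ! k)"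
    using three_term_alternating_signs[OF ab \<open>\<gamma> > 0\<close>, of c] unfolding h_def by blast
  obtain d where d_len: "length d = Suc (length b)"
    and d: "\<And>k. k < length d \<Longrightarrow> t ! k < d ! k \<and> d ! k < t ! Suc k \<and> poly h (d ! k) = 0"
    using sign_changes_obtain_roots[OF t_sorted t_sign] t_len
    by (metis add_2_eq_Suc' diff_Suc_1)
  have "strictly_interlacing b d"
    unfolding strictly_interlacing_def
  proof (intro conjI allI impI d_len)
    fix i assume "i < length b"
    then show "d ! i < b ! i" "b ! i < d ! Suc i"
      using d[of i] d[of "Suc i"] d_len t_b by simp_all
  qed
  moreover have "h = poly_of_roots d"
  proof (rule eq_poly_of_rootsI)
    show "distinct d"
      using strictly_interlacing_sorted(2)[OF \<open>strictly_interlacing b d\<close>]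
      by (simp add: strict_sorted_iff)
    have "degree (smult \<gamma> (poly_of_roots a)) < length (c # b)"
      using ab by (simp add: degree_poly_of_roots strictly_interlacing_def)
    from poly_of_roots_minus_lower_degree[OF this, folded h_def]
    show "degree h = length d" "lead_coeff h = 1"
      using d_len by simp_all
    show "poly h x = 0" if "x \<in> set d" for x
      using that d by (auto simp: in_set_conv_nth)
  qed
  ultimately show thesis
    by (intro that[of d]) (simp_all add: h_def)
qed

lemma three_term_recurrence_strictly_interlacing:
  fixes p :: "nat \<Rightarrow> real poly" and c \<gamma> :: "nat \<Rightarrow> real"
  assumes "p 0 = 1" and "p (Suc 0) = [:- c 0, 1:]"
    and "\<And>n. p (Suc (Suc n)) = [:- c (Suc n), 1:] * p (Suc n) - smult (\<gamma> n) (p n)"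
    and "\<And>n. \<gamma> n > 0"
  shows "\<exists>a b. strictly_interlacing a b \<and> p n = poly_of_roots a \<and> p (Suc n) = poly_of_roots b"
proof (induction n)
  case 0
  show ?case
    by (rule exI[of _ "[]"], rule exI[of _ "[c 0]"])
       (simp add: assms(1,2) strictly_interlacing_def poly_of_roots_def)
next
  case (Suc n)
  then obtain a b where ab: "strictly_interlacing a b"
    and "p n = poly_of_roots a" "p (Suc n) = poly_of_roots b"
    by blast
  moreover obtain d where "strictly_interlacing b d"
    and "poly_of_roots (c (Suc n) # b) - smult (\<gamma> n) (poly_of_roots a) = poly_of_roots d"
    using three_term_step_strictly_interlacing[OF ab assms(4)] by blast
  ultimately show ?case
    by (auto simp: assms(3) poly_of_roots_def)
qed

definition hermite_coeff :: "nat \<Rightarrow> nat \<Rightarrow> real" where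
  "hermite_coeff n j = (if j \<le> n \<and> even (n - j) then
     fact n * (-1) ^ ((n - j) div 2) / (fact ((n - j) div 2) * fact j) * 2 ^ j else 0)"

lemma coeff_hermite: "coeff (hermite n) j = hermite_coeff n j"
proof -
  have "coeff (hermite n) j = (\<Sum>m\<le>n div 2.
      if j \<le> n \<and> even (n - j) \<and> m = (n - j) div 2 then
        fact n * (-1) ^ m / (fact m * fact (n - 2 * m)) * 2 ^ (n - 2 * m) else 0)"
    unfolding hermite_def coeff_sum by (intro sum.cong refl) (auto, presburger+)
  also have "\<dots> = hermite_coeff n j"
  proof (cases "j \<le> n \<and> even (n - j)")
    case True
    then have "n - 2 * ((n - j) div 2) = j" "(n - j) div 2 \<le> n div 2"
      by presburger+
    with True show ?thesis by (simp add: hermite_coeff_def)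
  qed (auto simp: hermite_coeff_def split: if_splits intro!: sum.neutral)
  finally show ?thesis .
qed

lemma hermite_0: "hermite 0 = 1"
  by (simp add: hermite_def)

lemma hermite_1: "hermite (Suc 0) = [:0, 2:]"
  by (rule poly_eqI) (simp add: coeff_hermite hermite_coeff_def coeff_pCons split: nat.split)

lemma pderiv_hermite: "pderiv (hermite (Suc n)) = smult (2 * of_nat (Suc n)) (hermite n)"
proof (rule poly_eqI)
  fix j
  show "coeff (pderiv (hermite (Suc n))) j = coeff (smult (2 * of_nat (Suc n)) (hermite n)) j"
  proof (cases "j \<le> n \<and> even (n - j)")
    case True
    then obtain m where "n = j + 2 * m" by (metis evenE le_add_diff_inverse)
    then show ?thesis
      by (simp add: coeff_pderiv coeff_hermite hermite_coeff_def divide_simps)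
  qed (auto simp: coeff_pderiv coeff_hermite hermite_coeff_def)
qed

lemma hermite_coeff_Suc_Suc:
  "hermite_coeff (Suc (Suc n)) j =
     (case j of 0 \<Rightarrow> 0 | Suc i \<Rightarrow> 2 * hermite_coeff (Suc n) i)
       - 2 * of_nat (Suc n) * hermite_coeff n j"
proof -
  have "\<not> (j \<le> Suc (Suc n) \<and> even (Suc (Suc n) - j)) \<or> j = Suc (Suc n)
    \<or> (\<exists>k. j = 0 \<and> n = 2 * k) \<or> (\<exists>i k. j = Suc i \<and> n = i + 2 * k + 1)"
    \<comment> \<open>vanishing, leading, constant and interior coefficients\<close>
    by presburger
  then show ?thesis
    by (elim disjE exE conjE;
        auto simp: hermite_coeff_def divide_simps split: nat.split; simp add: algebra_simps)
qed

lemma hermite_Suc_Suc: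
  "hermite (Suc (Suc n)) = [:0, 2:] * hermite (Suc n) - smult (2 * of_nat (Suc n)) (hermite n)"
  by (rule poly_eqI) (simp add: coeff_pCons coeff_hermite hermite_coeff_Suc_Suc split: nat.split)

lemma roots_interlace_hermite_half:
  "roots_interlace (pcompose (hermite n) [:0, 1 / 2:])
     (pcompose (hermite (Suc n)) [:0, 1 / 2:])"
proof -
  have "\<exists>a b. strictly_interlacing a b \<and> pcompose (hermite n) [:0, 1 / 2:] = poly_of_roots a
      \<and> pcompose (hermite (Suc n)) [:0, 1 / 2:] = poly_of_roots b"
    by (rule three_term_recurrence_strictly_interlacing
          [where c = "\<lambda>_. 0" and \<gamma> = "\<lambda>n. 2 * of_nat (Suc n)"])
       (simp_all add: hermite_0 hermite_1 hermite_Suc_Suc pcompose_1 pcompose_diff pcompose_mult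
          pcompose_smult pcompose_pCons)
  then show ?thesis
    using strictly_interlacing_roots_interlace by auto
qed

text \<open>
  Both sides of the operator identity, truncated at an arbitrary bound \<open>N \<ge> degree p\<close> so that
  they can be compared by induction on \<open>N\<close>: \<open>T_beta \<beta> p = hermite_image (\<beta>/2) (degree p) p\<close>.
\<close>

definition hermite_image :: "real \<Rightarrow> nat \<Rightarrow> real poly \<Rightarrow> real poly" where
  "hermite_image a N p = (\<Sum>k\<le>N. smult (coeff p k) (pcompose (hermite k) [:0, a:]))"

definition hermite_series :: "real \<Rightarrow> nat \<Rightarrow> real poly \<Rightarrow> real poly" where
  "hermite_series b N p =
     (\<Sum>n\<le>N. smult (1 / fact n) (pcompose (hermite n) [:0, b:] * (pderiv ^^ n) p))"

text \<open>For \<open>n = 0\<close> the factor \<open>2 n a\<close> vanishes, so the truncated \<open>n - 1\<close> is harmless.\<close>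

lemma pderiv_hermite_pcompose:
  "pderiv (pcompose (hermite n) [:0, a:]) =
     smult (2 * of_nat n * a) (pcompose (hermite (n - 1)) [:0, a:])"
proof (cases n)
  case 0
  then show ?thesis by (simp add: hermite_0 pcompose_1)
next
  case (Suc m)
  then show ?thesis
    by (simp add: pderiv_pcompose pderiv_hermite pcompose_smult pderiv_pCons mult_ac)
qed

lemma pderiv_hermite_image:
  "pderiv (hermite_image a (Suc N) p) = smult (2 * a) (hermite_image a N (pderiv p))"
proof -
  have "pderiv (hermite_image a (Suc N) p) =
      (\<Sum>k\<le>N. smult (coeff p (Suc k) * (2 * of_nat (Suc k) * a))
        (pcompose (hermite k) [:0, a:]))"
    unfolding hermite_image_def pderiv_sum
    by (simp add: sum.atMost_Suc_shift pderiv_smult pderiv_hermite_pcompose del: sum.atMost_Suc)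
  also have "\<dots> = smult (2 * a) (hermite_image a N (pderiv p))"
    unfolding hermite_image_def smult_sum
    by (intro sum.cong refl) (simp add: coeff_pderiv algebra_simps)
  finally show ?thesis .
qed

lemma pderiv_hermite_series:
  "pderiv (hermite_series b (Suc N) p) =
     smult (2 * b) (hermite_series b N (pderiv p)) + hermite_series b (Suc N) (pderiv p)"
proof -
  let ?H = "\<lambda>n. pcompose (hermite n) [:0, b:]"
  have "pderiv (hermite_series b (Suc N) p) =
      (\<Sum>n\<le>Suc N. smult (1 / fact n) (pderiv (?H n) * (pderiv ^^ n) p))
    + hermite_series b (Suc N) (pderiv p)"
    unfolding hermite_series_def pderiv_sum
    by (simp add: pderiv_smult pderiv_mult sum.distrib smult_add_right funpow_swap1 mult.commute)
  also have "(\<Sum>n\<le>Suc N. smult (1 / fact n) (pderiv (?H n) * (pderiv ^^ n) p)) =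
      (\<Sum>n\<le>N. smult (1 / fact (Suc n) * (2 * of_nat (Suc n) * b))
        (?H n * (pderiv ^^ n) (pderiv p)))"
    by (simp add: sum.atMost_Suc_shift pderiv_hermite_pcompose funpow_swap1 del: sum.atMost_Suc)
  also have "\<dots> = smult (2 * b) (hermite_series b N (pderiv p))"
    unfolding hermite_series_def smult_sum by (simp del: of_nat_Suc)
  finally show ?thesis .
qed

lemma hermite_series_Suc:
  "degree p \<le> N \<Longrightarrow> hermite_series b (Suc N) p = hermite_series b N p"
  by (simp add: hermite_series_def higher_pderiv_eq_0 del: funpow.simps)

lemma poly_hermite_image_0:
  "poly (hermite_image a N p) 0 = (\<Sum>k\<le>N. coeff p k * poly (hermite k) 0)"
  by (simp add: hermite_image_def poly_sum poly_pcompose)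

lemma poly_hermite_series_0:
  "poly (hermite_series b N p) 0 = (\<Sum>k\<le>N. coeff p k * poly (hermite k) 0)"
  by (simp add: hermite_series_def poly_sum poly_pcompose poly_higher_pderiv_0 mult.commute)

lemma hermite_image_eq_hermite_series:
  assumes "2 * b + 1 = 2 * a" and "degree p \<le> N"
  shows "hermite_image a N p = hermite_series b N p"
  using assms(2)
proof (induction N arbitrary: p)
  case 0
  then obtain c where "p = [:c:]" by (auto elim: degree_eq_zeroE)
  then show ?case by (simp add: hermite_image_def hermite_series_def hermite_0 pcompose_1)
next
  case (Suc N)
  have deg: "degree (pderiv p) \<le> N"
    using Suc.prems by (simp add: degree_pderiv)
  have "pderiv (hermite_image a (Suc N) p) = smult (2 * a) (hermite_series b N (pderiv p))"
    using Suc.IH[OF deg] by (simp add: pderiv_hermite_image)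
  also have "\<dots> =
      smult (2 * b) (hermite_series b N (pderiv p)) + hermite_series b (Suc N) (pderiv p)"
    by (simp add: hermite_series_Suc[OF deg] smult_add_left flip: assms(1))
  also have "\<dots> = pderiv (hermite_series b (Suc N) p)"
    by (simp add: pderiv_hermite_series)
  finally show ?case
    by (rule eq_by_pderiv) (simp add: poly_hermite_image_0 poly_hermite_series_0)
qed

theorem theorem4p1:
  fixes \<beta> :: real
  assumes "\<beta> \<noteq> 0"
  shows "(\<forall>p :: real poly. T_beta \<beta> p =
            (\<Sum>n\<le>degree p. smult (1 / fact n)
               (pcompose (hermite n) [:0, (\<beta> - 1) / 2:] * (pderiv ^^ n) p)))
       \<and> (\<forall>n. roots_interlace (pcompose (hermite n) [:0, (2 - 1) / 2:])
                              (pcompose (hermite (Suc n)) [:0, (2 - 1) / 2:]))"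
proof (intro conjI allI)
  fix p :: "real poly"
  have "T_beta \<beta> p = hermite_image (\<beta> / 2) (degree p) p"
    by (simp add: T_beta_def hermite_image_def)
  also have "\<dots> = hermite_series ((\<beta> - 1) / 2) (degree p) p"
    by (rule hermite_image_eq_hermite_series) (simp_all add: field_simps)
  finally show "T_beta \<beta> p = (\<Sum>n\<le>degree p. smult (1 / fact n)
      (pcompose (hermite n) [:0, (\<beta> - 1) / 2:] * (pderiv ^^ n) p))"
    by (simp add: hermite_series_def)
next
  fix n
  show "roots_interlace (pcompose (hermite n) [:0, (2 - 1) / 2:])
      (pcompose (hermite (Suc n)) [:0, (2 - 1) / 2:])"
    using roots_interlace_hermite_half[of n] by simp
qed

end
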